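(* Let $(P,\leq)$ be a partially ordered set, $S(P):=\{(p,q)\in P^2: p\leq q,\ p\neq q\}$ its strict order, and $O(P)$ the lattice of suborders of $P$, i.e. the set of transitively closed subsets of $S(P)$ ordered by inclusion. Then $O(P)$ is order-scattered if and only if $S(P)$ is finite.
   Context: A poset is order-scattered if it contains no subset order-isomorphic to the chain $\mathbb{Q}$ of rationals. A subset $R\subseteq S(P)$ is transitively closed if $(a,b),(b,c)\in R$ imply $(a,c)\in R$. *)

theory Defs
  imports Complex_Main
begin

text \<open>A poset is given by a carrier P and a relation le with partial_order_on P le.\<close>

definition strict_order :: "'a set \<Rightarrow> 'a rel \<Rightarrow> 'a rel" where
  "strict_order P le = {(p, q). p \<in> P \<and> q \<in> P \<and> (p, q) \<in> le \<and> p \<noteq> q}"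

definition suborders :: "'a set \<Rightarrow> 'a rel \<Rightarrow> 'a rel set" where
  "suborders P le = {R. R \<subseteq> strict_order P le \<and> trans R}"

definition order_scattered :: "'b set \<Rightarrow> 'b rel \<Rightarrow> bool" where
  "order_scattered A r \<longleftrightarrow>
     \<not> (\<exists>f :: rat \<Rightarrow> 'b. range f \<subseteq> A \<and> (\<forall>x y. (f x, f y) \<in> r \<longleftrightarrow> x \<le> y))"

definition inclusion_order :: "'b set set \<Rightarrow> 'b set rel" where
  "inclusion_order A = {(X, Y). X \<in> A \<and> Y \<in> A \<and> X \<subseteq> Y}"

end

theory Submission
  imports Defs "HOL-Library.Ramsey" "HOL-Library.Countable"
begin

text \<open>If \<open>S(P)\<close> is finite, so is \<open>O(P)\<close>, and a finite poset has no copy of \<open>\<rat>\<close>.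
  If \<open>S(P)\<close> is infinite, colour each pair of elements of \<open>S(P)\<close> by whether the two strict
  pairs compose. By Ramsey's theorem there is an infinite homogeneous set \<open>Y\<close>; it cannot be
  homogeneously composable, since three pairwise composable strict pairs would force a cycle in
  \<open>P\<close>. So no two elements of \<open>Y\<close> compose, every subset of \<open>Y\<close> is transitively closed, and
  enumerating \<open>Y\<close> by the rationals, the sets \<open>{y\<^sub>r | r < q}\<close> form a copy of \<open>\<rat>\<close> in \<open>O(P)\<close>.\<close>

lemma finite_suborders:
  assumes "finite (strict_order P le)"
  shows "finite (suborders P le)"
  using assms by (rule finite_subset[rotated, OF finite_Pow_iff[THEN iffD2]]) (auto simp: suborders_def)

lemma order_scattered_if_finite:
  fixes A :: "'b set"
  assumes "finite A"
  shows "order_scattered A r"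
  unfolding order_scattered_def
proof
  assume "\<exists>f :: rat \<Rightarrow> 'b. range f \<subseteq> A \<and> (\<forall>x y. (f x, f y) \<in> r \<longleftrightarrow> x \<le> y)"
  then obtain f :: "rat \<Rightarrow> 'b" where f: "range f \<subseteq> A" "\<And>x y. (f x, f y) \<in> r \<longleftrightarrow> x \<le> y"
    by blast
  have "inj f"
  proof (rule injI)
    fix x y :: rat
    assume "f x = f y"
    then have "x \<le> y \<longleftrightarrow> y \<le> x" using f(2)[of x y] f(2)[of y x] by simp
    then show "x = y" by linarith
  qed
  with f(1) assms have "finite (UNIV :: rat set)"
    by (meson finite_imageD finite_subset)
  then show False using infinite_UNIV_char_0 by blast
qed

lemma rat_embedding_into_Pow:
  assumes "infinite Y"
  obtains f :: "rat \<Rightarrow> 'b set" where "\<And>q. f q \<subseteq> Y" and "\<And>x y. f x \<subseteq> f y \<longleftrightarrow> x \<le> y"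
proof -
  obtain g :: "nat \<Rightarrow> 'b" where g: "inj g" "range g \<subseteq> Y"
    using infinite_countable_subset[OF assms] by blast
  define h where "h = g \<circ> (to_nat :: rat \<Rightarrow> nat)"
  have "inj h" unfolding h_def using g(1) by (simp add: inj_compose)
  show thesis
  proof
    show "h ` {r. r < q} \<subseteq> Y" for q using g(2) by (auto simp: h_def)
    show "h ` {r. r < x} \<subseteq> h ` {r. r < y} \<longleftrightarrow> x \<le> y" for x y
    proof -
      have "{r. r < x} \<subseteq> {r. r < y} \<longleftrightarrow> x \<le> y"
        by (auto intro: less_le_trans) (metis less_irrefl mem_Collect_eq not_le subsetD)
      with \<open>inj h\<close> show ?thesis by (simp add: inj_image_subset_iff)
    qed
  qed
qed

lemma not_order_scattered_if_Pow_infinite_subset: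
  assumes "infinite Y" and "Pow Y \<subseteq> A"
  shows "\<not> order_scattered A (inclusion_order A)"
proof -
  obtain f :: "rat \<Rightarrow> _" where f: "\<And>q. f q \<subseteq> Y" "\<And>x y. f x \<subseteq> f y \<longleftrightarrow> x \<le> y"
    using rat_embedding_into_Pow[OF assms(1)] by blast
  have "range f \<subseteq> A" using f(1) assms(2) by blast
  with f(2) show ?thesis
    unfolding order_scattered_def inclusion_order_def by blast
qed

lemma Pow_subset_suborders_if_relcomp_empty:
  assumes "Y \<subseteq> strict_order P le" and "Y O Y = {}"
  shows "Pow Y \<subseteq> suborders P le"
  using assms unfolding suborders_def trans_def by blast

lemma strict_pair_relcomp_nonempty_iff:
  assumes "u \<in> strict_order P le" and "v \<in> strict_order P le"
  shows "{u, v} O {u, v} \<noteq> {} \<longleftrightarrow> snd u = fst v \<or> snd v = fst u"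
  using assms by (cases u; cases v) (fastforce simp: strict_order_def)

text \<open>The three coincidences between endpoints either close a cycle in \<open>P\<close>, which antisymmetry
  forbids, or identify both endpoints of one pair.\<close>
lemma no_three_pairwise_composable_strict_pairs:
  assumes po: "partial_order_on P le"
    and S: "x \<in> strict_order P le" "y \<in> strict_order P le" "z \<in> strict_order P le"
    and distinct: "x \<noteq> y" "x \<noteq> z" "y \<noteq> z"
    and xy: "{x, y} O {x, y} \<noteq> {}" and xz: "{x, z} O {x, z} \<noteq> {}" and yz: "{y, z} O {y, z} \<noteq> {}"
  shows False
proof -
  have cycle: "a = b" if "(a, b) \<in> le" "(b, c) \<in> le" "(c, a) \<in> le" for a b c
    using po that unfolding partial_order_on_def preorder_on_def by (meson antisymD transD)
  obtain x1 x2 y1 y2 z1 z2 where xyz: "x = (x1, x2)" "y = (y1, y2)" "z = (z1, z2)"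
    by (cases x; cases y; cases z)
  have le: "(x1, x2) \<in> le" "(y1, y2) \<in> le" "(z1, z2) \<in> le"
    and ne: "x1 \<noteq> x2" "y1 \<noteq> y2" "z1 \<noteq> z2"
    using S xyz by (auto simp: strict_order_def)
  have "x2 = y1 \<or> y2 = x1" "x2 = z1 \<or> z2 = x1" "y2 = z1 \<or> z2 = y1"
    using strict_pair_relcomp_nonempty_iff[OF S(1,2)] strict_pair_relcomp_nonempty_iff[OF S(1,3)]
      strict_pair_relcomp_nonempty_iff[OF S(2,3)] xy xz yz xyz by auto
  then show False
    using le ne cycle[of x1 y1 z1] cycle[of y1 x1 z1] by (elim disjE) simp_all
qed

lemma infinite_relcomp_free_subset:
  assumes po: "partial_order_on P le" and inf: "infinite (strict_order P le)"
  obtains Y where "Y \<subseteq> strict_order P le" "infinite Y" "Y O Y = {}"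
proof -
  define colour :: "'a rel \<Rightarrow> nat" where "colour A = (if A O A = {} then 0 else 1)" for A
  have "\<exists>Y t. Y \<subseteq> strict_order P le \<and> infinite Y \<and> t < 2 \<and>
      (\<forall>u\<in>Y. \<forall>v\<in>Y. u \<noteq> v \<longrightarrow> colour {u, v} = t)"
    by (rule Ramsey2[OF inf]) (simp add: colour_def)
  then obtain Y t where Y: "Y \<subseteq> strict_order P le" "infinite Y"
    and hom: "\<forall>u\<in>Y. \<forall>v\<in>Y. u \<noteq> v \<longrightarrow> colour {u, v} = t"
    by (elim exE conjE)
  have pair_free: "{u, v} O {u, v} = {}" if "u \<in> Y" "v \<in> Y" "u \<noteq> v" for u v
  proof (rule ccontr)
    assume "{u, v} O {u, v} \<noteq> {}"
    then have t: "t = 1" using hom[rule_format, OF that] by (simp add: colour_def)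
    have composable: "{a, b} O {a, b} \<noteq> {}" if "a \<in> Y" "b \<in> Y" "a \<noteq> b" for a b
    proof
      assume "{a, b} O {a, b} = {}"
      then have "colour {a, b} = 0" by (simp add: colour_def)
      with hom[rule_format, OF that] t show False by simp
    qed
    obtain F where "F \<subseteq> Y" "card F = 3"
      using infinite_arbitrarily_large[OF Y(2)] by blast
    then obtain x y z where "x \<in> Y" "y \<in> Y" "z \<in> Y" "x \<noteq> y" "x \<noteq> z" "y \<noteq> z"
      by (auto simp: card_3_iff)
    with Y(1) show False
      by (meson composable no_three_pairwise_composable_strict_pairs[OF po] subsetD)
  qed
  have "Y O Y = {}"
  proof (rule equals0I)
    fix p
    assume "p \<in> Y O Y"
    then obtain a b c where ab: "(a, b) \<in> Y" and bc: "(b, c) \<in> Y" by blast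
    then have "(a, b) \<noteq> (b, c)" using Y(1) by (auto simp: strict_order_def)
    with ab bc have "{(a, b), (b, c)} O {(a, b), (b, c)} = {}" by (rule pair_free)
    moreover have "(a, c) \<in> {(a, b), (b, c)} O {(a, b), (b, c)}" by blast
    ultimately show False by blast
  qed
  with Y show thesis by (rule that)
qed

theorem theorem6p2:
  fixes P :: "'a set" and le :: "'a rel"
  assumes "partial_order_on P le"
  shows "order_scattered (suborders P le) (inclusion_order (suborders P le))
         \<longleftrightarrow> finite (strict_order P le)"
proof
  assume scattered: "order_scattered (suborders P le) (inclusion_order (suborders P le))"
  show "finite (strict_order P le)"
  proof (rule ccontr)
    assume "infinite (strict_order P le)"
    then obtain Y where "Y \<subseteq> strict_order P le" "infinite Y" "Y O Y = {}"
      using infinite_relcomp_free_subset[OF assms] by blast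
    then have "\<not> order_scattered (suborders P le) (inclusion_order (suborders P le))"
      by (intro not_order_scattered_if_Pow_infinite_subset Pow_subset_suborders_if_relcomp_empty)
    with scattered show False by contradiction
  qed
next
  assume "finite (strict_order P le)"
  then show "order_scattered (suborders P le) (inclusion_order (suborders P le))"
    by (intro order_scattered_if_finite finite_suborders)
qed

end
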